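(* Let $G$ be a finite simple graph, and let $C_1$, $C_2$, $C_3$ be nonempty connected induced subgraphs of $G$ such that for every $i\neq j$ the distance in $G$ between $C_i$ and $C_j$ is at least $2$. Let $k=\min\{\mathrm{lmw}(C_1),\mathrm{lmw}(C_2),\mathrm{lmw}(C_3)\}$. Suppose that for each pair $\{i,j\}\subseteq\{1,2,3\}$ with $i\neq j$, letting $l$ be the third index, there exists a path $P_{i,j}$ in $G$ from a vertex of $C_i$ to a vertex of $C_j$ that does not intersect the closed neighborhood $N_G[V(C_l)]$. Then $\mathrm{lmw}(G)>k$.
   Context: All graphs are finite and simple. For $S\subseteq V(G)$, $N_G[S]=\bigcup_{v\in S}(N_G(v)\cup\{v\})$. The distance between two subgraphs $H,H'$ of $G$ is the minimum distance in $G$ between a vertex of $H$ and a vertex of $H'$. For disjoint $S,T\subseteq V(G)$, $G[S,T]$ denotes the bipartite graph on $S\cup T$ whose edges are exactly the edges of $G$ with one endpoint in $S$ and the other in $T$. $\mathrm{mim}(H)$ is the maximum number of edges in an induced matching of $H$. A linear layout of an $n$-vertex graph $G$ is a bijection $\sigma:V(G)\to\{1,\dots,n\}$; write $v_i=\sigma^{-1}(i)$ and $V_i^\sigma=\{v_1,\dots,v_i\}$, $\overline{V_i^\sigma}=V(G)\setminus V_i^\sigma$. The MIM-width of $G$ under $\sigma$ is $\mathrm{mw}(\sigma,G)=\max_{1\le i<n}\mathrm{mim}(G[V_i^\sigma,\overline{V_i^\sigma}])$ (equal to $0$ if $n\le 1$). The linear MIM-width $\mathrm{lmw}(G)$ is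 the minimum of $\mathrm{mw}(\sigma,G)$ over all linear layouts $\sigma$ of $G$. *)

theory Defs
  imports Main "HOL-Library.Extended_Nat"
begin

definition simple_graph :: "'a set \<Rightarrow> ('a \<Rightarrow> 'a \<Rightarrow> bool) \<Rightarrow> bool" where
  "simple_graph V E \<longleftrightarrow> finite V \<and> (\<forall>u v. E u v \<longrightarrow> u \<in> V \<and> v \<in> V)
     \<and> (\<forall>u v. E u v \<longrightarrow> E v u) \<and> (\<forall>u. \<not> E u u)"

definition induced :: "'a set \<Rightarrow> ('a \<Rightarrow> 'a \<Rightarrow> bool) \<Rightarrow> ('a \<Rightarrow> 'a \<Rightarrow> bool)" where
  "induced C E = (\<lambda>u v. u \<in> C \<and> v \<in> C \<and> E u v)"

definition is_path :: "'a set \<Rightarrow> ('a \<Rightarrow> 'a \<Rightarrow> bool) \<Rightarrow> 'a list \<Rightarrow> bool" where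
  "is_path V E p \<longleftrightarrow> p \<noteq> [] \<and> distinct p \<and> set p \<subseteq> V
     \<and> (\<forall>i. Suc i < length p \<longrightarrow> E (p ! i) (p ! Suc i))"

definition connected_graph :: "'a set \<Rightarrow> ('a \<Rightarrow> 'a \<Rightarrow> bool) \<Rightarrow> bool" where
  "connected_graph V E \<longleftrightarrow> V \<noteq> {} \<and>
     (\<forall>u\<in>V. \<forall>v\<in>V. \<exists>p. is_path V E p \<and> hd p = u \<and> last p = v)"

text \<open>Distance in G between vertex sets A and B (infinity if no path).\<close>
definition set_dist :: "'a set \<Rightarrow> ('a \<Rightarrow> 'a \<Rightarrow> bool) \<Rightarrow> 'a set \<Rightarrow> 'a set \<Rightarrow> enat" where
  "set_dist V E A B =
     (INF p \<in> {p. is_path V E p \<and> hd p \<in> A \<and> last p \<in> B}. enat (length p - 1))"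

definition closed_nbhd :: "'a set \<Rightarrow> ('a \<Rightarrow> 'a \<Rightarrow> bool) \<Rightarrow> 'a set \<Rightarrow> 'a set" where
  "closed_nbhd V E S = S \<union> {v \<in> V. \<exists>u\<in>S. E u v}"

definition bip :: "('a \<Rightarrow> 'a \<Rightarrow> bool) \<Rightarrow> 'a set \<Rightarrow> 'a set \<Rightarrow> ('a \<Rightarrow> 'a \<Rightarrow> bool)" where
  "bip E S T = (\<lambda>u v. E u v \<and> ((u \<in> S \<and> v \<in> T) \<or> (u \<in> T \<and> v \<in> S)))"

definition induced_matching :: "'a set \<Rightarrow> ('a \<Rightarrow> 'a \<Rightarrow> bool) \<Rightarrow> 'a set set \<Rightarrow> bool" where
  "induced_matching W F M \<longleftrightarrow>
     M \<subseteq> {{u, v} | u v. u \<in> W \<and> v \<in> W \<and> F u v} \<and>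
     (\<forall>e\<in>M. \<forall>e'\<in>M. e \<noteq> e' \<longrightarrow> e \<inter> e' = {} \<and> (\<forall>u\<in>e. \<forall>v\<in>e'. \<not> F u v))"

definition mim :: "'a set \<Rightarrow> ('a \<Rightarrow> 'a \<Rightarrow> bool) \<Rightarrow> nat" where
  "mim W F = Max {card M | M. induced_matching W F M}"

definition linear_layout :: "'a set \<Rightarrow> ('a \<Rightarrow> nat) \<Rightarrow> bool" where
  "linear_layout V \<sigma> \<longleftrightarrow> bij_betw \<sigma> V {1..card V}"

definition prefix_set :: "'a set \<Rightarrow> ('a \<Rightarrow> nat) \<Rightarrow> nat \<Rightarrow> 'a set" where
  "prefix_set V \<sigma> i = {v \<in> V. \<sigma> v \<le> i}"

definition mw :: "'a set \<Rightarrow> ('a \<Rightarrow> 'a \<Rightarrow> bool) \<Rightarrow> ('a \<Rightarrow> nat) \<Rightarrow> nat" where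
  "mw V E \<sigma> = Max ({0} \<union>
     {mim V (bip E (prefix_set V \<sigma> i) (V - prefix_set V \<sigma> i)) | i. 1 \<le> i \<and> i < card V})"

definition lmw :: "'a set \<Rightarrow> ('a \<Rightarrow> 'a \<Rightarrow> bool) \<Rightarrow> nat" where
  "lmw V E = Min {mw V E \<sigma> | \<sigma>. linear_layout V \<sigma>}"

end

(*
  Fix a layout \<sigma> of G of minimum width. If k = 0 it suffices that G has an edge. Otherwise \<sigma>
  induces a layout of each C_i, so some cut s_i of \<sigma> has vertices of C_i on both sides and
  carries an induced matching of size k consisting of edges of C_i. Let s_b be the median of the
  three cuts and a, c the other two indices: then C_a \<union> C_c has vertices on both sides of s_b.
  Since C_a, the path P_{a,c} and C_c are connected, pairwise linked and avoid N[C_b], one of them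
  has an edge crossing s_b, and this edge is far from C_b, so adding it to the matching of C_b
  yields an induced matching of size k + 1 in the cut s_b.
*)

theory Submission
  imports Defs
begin

abbreviation layout_cut :: "'a set \<Rightarrow> ('a \<Rightarrow> 'a \<Rightarrow> bool) \<Rightarrow> ('a \<Rightarrow> nat) \<Rightarrow> nat \<Rightarrow> 'a \<Rightarrow> 'a \<Rightarrow> bool" where
  "layout_cut V E \<sigma> i \<equiv> bip E (prefix_set V \<sigma> i) (V - prefix_set V \<sigma> i)"

definition straddles :: "('a \<Rightarrow> nat) \<Rightarrow> nat \<Rightarrow> 'a set \<Rightarrow> bool" where
  "straddles \<sigma> s X \<longleftrightarrow> (\<exists>x\<in>X. \<sigma> x \<le> s) \<and> (\<exists>y\<in>X. s < \<sigma> y)"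

lemma induced_matching_subset_Pow: "induced_matching W F M \<Longrightarrow> M \<subseteq> Pow W"
  unfolding induced_matching_def by blast

lemma finite_induced_matching_sizes:
  "finite W \<Longrightarrow> finite {card M |M. induced_matching W F M}"
  by (rule finite_subset[of _ "{..card (Pow W)}"])
     (auto dest!: induced_matching_subset_Pow intro: card_mono)

lemma card_le_mim: "finite W \<Longrightarrow> induced_matching W F M \<Longrightarrow> card M \<le> mim W F"
  unfolding mim_def by (rule Max_ge[OF finite_induced_matching_sizes]) auto

lemma mim_attained:
  assumes "finite W"
  obtains M where "induced_matching W F M" "card M = mim W F"
proof -
  have "induced_matching W F {}" unfolding induced_matching_def by simp
  then have "mim W F \<in> {card M |M. induced_matching W F M}"
    unfolding mim_def by (intro Max_in finite_induced_matching_sizes assms) auto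
  then show ?thesis using that by auto
qed

lemma mim_le_card_Pow: "finite W \<Longrightarrow> mim W F \<le> card (Pow W)"
  by (metis mim_attained induced_matching_subset_Pow card_mono finite_Pow_iff)

lemma finite_cut_mims:
  "finite ({0} \<union> {mim V (layout_cut V E \<sigma> i) | i. 1 \<le> i \<and> i < card V})"
  by (simp add: finite_image_set)

lemma mim_cut_le_mw: "1 \<le> i \<Longrightarrow> i < card V \<Longrightarrow> mim V (layout_cut V E \<sigma> i) \<le> mw V E \<sigma>"
  unfolding mw_def by (rule Max_ge[OF finite_cut_mims]) blast

lemma mw_in_cut_mims:
  "mw V E \<sigma> \<in> {0} \<union> {mim V (layout_cut V E \<sigma> i) | i. 1 \<le> i \<and> i < card V}"
  unfolding mw_def by (rule Max_in[OF finite_cut_mims]) simp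

lemma mw_attained_cut:
  assumes "1 \<le> k" "k \<le> mw V E \<sigma>"
  obtains i where "1 \<le> i" "i < card V" "k \<le> mim V (layout_cut V E \<sigma> i)"
  using mw_in_cut_mims[of V E \<sigma>] assms that by auto

lemma mw_le_card_Pow: "finite V \<Longrightarrow> mw V E \<sigma> \<le> card (Pow V)"
  using mw_in_cut_mims[of V E \<sigma>] mim_le_card_Pow by fastforce

lemma finite_layout_widths: "finite V \<Longrightarrow> finite {mw V E \<sigma> | \<sigma>. linear_layout V \<sigma>}"
  by (rule finite_subset[of _ "{..card (Pow V)}"]) (auto intro: mw_le_card_Pow)

lemma lmw_le_mw: "finite V \<Longrightarrow> linear_layout V \<sigma> \<Longrightarrow> lmw V E \<le> mw V E \<sigma>"
  unfolding lmw_def by (rule Min_le[OF finite_layout_widths]) auto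

lemma lmw_attained:
  assumes "finite V"
  obtains \<sigma> where "linear_layout V \<sigma>" "lmw V E = mw V E \<sigma>"
proof -
  have "\<exists>\<sigma>. linear_layout V \<sigma>"
    unfolding linear_layout_def by (rule finite_same_card_bij) (use assms in auto)
  then have "lmw V E \<in> {mw V E \<sigma> | \<sigma>. linear_layout V \<sigma>}"
    unfolding lmw_def by (intro Min_in finite_layout_widths assms) auto
  then show ?thesis using that by auto
qed

definition layout_rank :: "('a \<Rightarrow> nat) \<Rightarrow> 'a set \<Rightarrow> 'a \<Rightarrow> nat" where
  "layout_rank \<sigma> C v = card {w \<in> C. \<sigma> w \<le> \<sigma> v}"

lemma layout_rank_le_iff:
  assumes "finite C" "v \<in> C" "w \<in> C"
  shows "layout_rank \<sigma> C v \<le> layout_rank \<sigma> C w \<longleftrightarrow> \<sigma> v \<le> \<sigma> w"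
proof
  assume "\<sigma> v \<le> \<sigma> w"
  then show "layout_rank \<sigma> C v \<le> layout_rank \<sigma> C w"
    unfolding layout_rank_def by (intro card_mono) (use assms in auto)
next
  assume le: "layout_rank \<sigma> C v \<le> layout_rank \<sigma> C w"
  show "\<sigma> v \<le> \<sigma> w"
  proof (rule ccontr)
    assume "\<not> \<sigma> v \<le> \<sigma> w"
    then have "{x \<in> C. \<sigma> x \<le> \<sigma> w} \<subset> {x \<in> C. \<sigma> x \<le> \<sigma> v}" using assms by auto
    then have "layout_rank \<sigma> C w < layout_rank \<sigma> C v"
      unfolding layout_rank_def by (intro psubset_card_mono) (use assms in auto)
    with le show False by simp
  qed
qed

lemma linear_layout_rank:
  assumes fin: "finite C" and inj: "inj_on \<sigma> C"
  shows "linear_layout C (layout_rank \<sigma> C)"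
proof -
  have "inj_on (layout_rank \<sigma> C) C"
    by (rule inj_onI) (metis fin inj inj_onD layout_rank_le_iff order_antisym order_refl)
  moreover have "layout_rank \<sigma> C ` C \<subseteq> {1..card C}"
  proof
    fix r assume "r \<in> layout_rank \<sigma> C ` C"
    then obtain v where v: "v \<in> C" "r = card {w \<in> C. \<sigma> w \<le> \<sigma> v}"
      unfolding layout_rank_def by blast
    then have "{w \<in> C. \<sigma> w \<le> \<sigma> v} \<noteq> {}" by blast
    with v fin show "r \<in> {1..card C}" by (auto simp: Suc_le_eq card_gt_0_iff intro: card_mono)
  qed
  ultimately have "layout_rank \<sigma> C ` C = {1..card C}"
    by (intro card_subset_eq) (simp_all add: card_image)
  with \<open>inj_on (layout_rank \<sigma> C) C\<close> show ?thesis
    unfolding linear_layout_def bij_betw_def by blast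
qed

lemma prefix_set_layout_rank:
  assumes "finite C" "v \<in> C"
  shows "prefix_set C (layout_rank \<sigma> C) (layout_rank \<sigma> C v) = {w \<in> C. \<sigma> w \<le> \<sigma> v}"
  unfolding prefix_set_def using layout_rank_le_iff[OF assms(1) _ assms(2), of _ \<sigma>] by blast

lemma induced_matching_restricted_cut:
  assumes CV: "C \<subseteq> V" and M: "induced_matching C (bip (induced C E) (C \<inter> S) (C - S)) M"
  shows "induced_matching V (bip E S (V - S)) M"
proof -
  let ?F = "bip (induced C E) (C \<inter> S) (C - S)"
  have edges: "M \<subseteq> {{u, v} |u v. u \<in> C \<and> v \<in> C \<and> ?F u v}"
    using M unfolding induced_matching_def by (rule conjunct1)
  have apart: "\<forall>e\<in>M. \<forall>e'\<in>M. e \<noteq> e' \<longrightarrow> e \<inter> e' = {} \<and> (\<forall>u\<in>e. \<forall>v\<in>e'. \<not> ?F u v)"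
    using M unfolding induced_matching_def by (rule conjunct2)
  have MC: "\<And>e. e \<in> M \<Longrightarrow> e \<subseteq> C" using induced_matching_subset_Pow[OF M] by blast
  have iff: "?F x y \<longleftrightarrow> bip E S (V - S) x y" if "x \<in> C" "y \<in> C" for x y
    using that CV unfolding bip_def induced_def by auto
  have "M \<subseteq> {{u, v} |u v. u \<in> V \<and> v \<in> V \<and> bip E S (V - S) u v}"
  proof
    fix e assume "e \<in> M"
    then obtain u v where "e = {u, v}" "u \<in> C" "v \<in> C" "?F u v" using edges by blast
    then show "e \<in> {{u, v} |u v. u \<in> V \<and> v \<in> V \<and> bip E S (V - S) u v}"
      using iff CV by blast
  qed
  moreover have "\<forall>e\<in>M. \<forall>e'\<in>M. e \<noteq> e' \<longrightarrow> e \<inter> e' = {} \<and> (\<forall>u\<in>e. \<forall>v\<in>e'. \<not> bip E S (V - S) u v)"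
  proof (intro ballI impI conjI)
    fix e e' assume ee': "e \<in> M" "e' \<in> M" "e \<noteq> e'"
    then show "e \<inter> e' = {}" using apart by blast
    fix u v assume uv: "u \<in> e" "v \<in> e'"
    have "\<not> ?F u v" using apart ee' uv by blast
    moreover have "u \<in> C" "v \<in> C" using MC ee' uv by auto
    ultimately show "\<not> bip E S (V - S) u v" using iff by simp
  qed
  ultimately show ?thesis unfolding induced_matching_def ..
qed

lemma restricted_layout_cut:
  assumes fin: "finite V" and CV: "C \<subseteq> V" and \<sigma>: "linear_layout V \<sigma>"
    and k: "1 \<le> k" "k \<le> lmw C (induced C E)"
  obtains s M where "induced_matching V (layout_cut V E \<sigma> s) M" "k \<le> card M"
    "\<forall>e\<in>M. e \<subseteq> C" "straddles \<sigma> s C"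
proof -
  let ?\<tau> = "layout_rank \<sigma> C"
  have finC: "finite C" using fin CV finite_subset by blast
  have "inj_on \<sigma> C"
    using \<sigma> CV unfolding linear_layout_def using bij_betw_imp_inj_on inj_on_subset by blast
  then have \<tau>: "linear_layout C ?\<tau>" by (rule linear_layout_rank[OF finC])
  then have "k \<le> mw C (induced C E) ?\<tau>" using k(2) lmw_le_mw[OF finC] order_trans by blast
  then obtain j where j: "1 \<le> j" "j < card C"
    and kj: "k \<le> mim C (layout_cut C (induced C E) ?\<tau> j)"
    using mw_attained_cut k(1) by blast
  obtain M where M: "induced_matching C (layout_cut C (induced C E) ?\<tau> j) M"
    and cardM: "card M = mim C (layout_cut C (induced C E) ?\<tau> j)"
    using mim_attained[OF finC] by blast
  have img: "?\<tau> ` C = {1..card C}" using \<tau> unfolding linear_layout_def by (rule bij_betw_imp_surj_on)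
  have "j \<in> ?\<tau> ` C" "card C \<in> ?\<tau> ` C" using img j by auto
  then obtain v w where v: "v \<in> C" "?\<tau> v = j" and w: "w \<in> C" "?\<tau> w = card C"
    by (metis imageE)
  \<comment> \<open>the cut of the induced layout at j is the trace on C of the cut of \<sigma> at \<sigma> v\<close>
  have "prefix_set C ?\<tau> j = C \<inter> prefix_set V \<sigma> (\<sigma> v)"
    using prefix_set_layout_rank[OF finC v(1)] v(2) CV unfolding prefix_set_def by auto
  then have "induced_matching V (layout_cut V E \<sigma> (\<sigma> v)) M"
    using M by (intro induced_matching_restricted_cut[OF CV]) (simp add: Diff_Int)
  moreover have "\<forall>e\<in>M. e \<subseteq> C" using induced_matching_subset_Pow[OF M] by blast
  moreover have "straddles \<sigma> (\<sigma> v) C"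
  proof -
    have "\<sigma> v < \<sigma> w" using layout_rank_le_iff[OF finC w(1) v(1), of \<sigma>] v w j by simp
    then show ?thesis unfolding straddles_def using v w by auto
  qed
  ultimately show ?thesis using that kj cardM by simp
qed

lemma straddles_mono: "straddles \<sigma> s X \<Longrightarrow> X \<subseteq> Y \<Longrightarrow> straddles \<sigma> s Y"
  unfolding straddles_def by blast

lemma straddles_Un_cases:
  assumes "X \<inter> Y \<noteq> {}" "straddles \<sigma> s (X \<union> Y)"
  shows "straddles \<sigma> s X \<or> straddles \<sigma> s Y"
proof -
  obtain z where z: "z \<in> X" "z \<in> Y" using assms(1) by blast
  show ?thesis
  proof (cases "\<sigma> z \<le> s")
    case True
    then show ?thesis using z assms(2) unfolding straddles_def by blast
  next
    case False
    then have "s < \<sigma> z" by simp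
    then show ?thesis using z assms(2) unfolding straddles_def by blast
  qed
qed

lemma straddles_Un_between:
  assumes "straddles \<sigma> sa A" "straddles \<sigma> sc C" "min sa sc \<le> s" "s \<le> max sa sc"
  shows "straddles \<sigma> s (A \<union> C)"
  using assms unfolding straddles_def
  by (cases "sa \<le> sc") (force simp: min_def max_def)+

lemma straddles_cut_range:
  assumes "linear_layout V \<sigma>" "X \<subseteq> V" "straddles \<sigma> s X"
  shows "1 \<le> s" "s < card V"
proof -
  obtain x y where xy: "x \<in> X" "\<sigma> x \<le> s" "y \<in> X" "s < \<sigma> y"
    using assms(3) unfolding straddles_def by blast
  have "\<sigma> ` V = {1..card V}"
    using assms(1) unfolding linear_layout_def bij_betw_def by simp
  moreover have "\<sigma> x \<in> \<sigma> ` V" "\<sigma> y \<in> \<sigma> ` V" using xy assms(2) by auto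
  ultimately have "1 \<le> \<sigma> x" "\<sigma> y \<le> card V" by auto
  with xy show "1 \<le> s" "s < card V" by simp_all
qed

lemma exists_adjacent_change:
  assumes "x \<in> set L" "y \<in> set L" "P x" "\<not> P y"
  shows "\<exists>i. Suc i < length L \<and> P (L ! i) \<noteq> P (L ! Suc i)"
proof (rule ccontr)
  assume "\<not> ?thesis"
  then have "P (L ! i) = P (L ! 0)" if "i < length L" for i
    using that by (induction i) auto
  then show False using assms by (auto simp: in_set_conv_nth)
qed

lemma is_path_induced: "C \<subseteq> V \<Longrightarrow> is_path C (induced C E) p \<Longrightarrow> is_path V E p"
  unfolding is_path_def induced_def by blast

lemma path_straddling_cut_edge:
  assumes sym: "\<forall>u v. E u v \<longrightarrow> E v u" and p: "is_path V E p" "straddles \<sigma> s (set p)"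
  obtains u v where "E u v" "u \<in> set p" "v \<in> set p" "\<sigma> u \<le> s" "s < \<sigma> v"
proof -
  obtain x y where "x \<in> set p" "y \<in> set p" "\<sigma> x \<le> s" "\<not> \<sigma> y \<le> s"
    using p(2) unfolding straddles_def by auto
  then obtain i where i: "Suc i < length p" "(\<sigma> (p ! i) \<le> s) \<noteq> (\<sigma> (p ! Suc i) \<le> s)"
    using exists_adjacent_change[of x p y "\<lambda>z. \<sigma> z \<le> s"] by blast
  have "E (p ! i) (p ! Suc i)" "p ! i \<in> set p" "p ! Suc i \<in> set p"
    using p(1) i(1) unfolding is_path_def by auto
  then show ?thesis using that i(2) sym by (metis not_le)
qed

lemma induced_matching_insert_cut_edge:
  assumes G: "simple_graph V E" and M: "induced_matching V (bip E S (V - S)) M"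
    and MC: "\<forall>e\<in>M. e \<subseteq> C" and uv: "E u v" "u \<in> S" "v \<notin> S"
    and far: "u \<notin> closed_nbhd V E C" "v \<notin> closed_nbhd V E C"
  shows "induced_matching V (bip E S (V - S)) (insert {u, v} M)"
proof -
  let ?F = "bip E S (V - S)"
  have edges: "M \<subseteq> {{u, v} |u v. u \<in> V \<and> v \<in> V \<and> ?F u v}"
    using M unfolding induced_matching_def by (rule conjunct1)
  have apart: "\<forall>e\<in>M. \<forall>e'\<in>M. e \<noteq> e' \<longrightarrow> e \<inter> e' = {} \<and> (\<forall>x\<in>e. \<forall>y\<in>e'. \<not> ?F x y)"
    using M unfolding induced_matching_def by (rule conjunct2)
  have uvV: "u \<in> V" "v \<in> V" and sym: "\<And>x y. E x y \<Longrightarrow> E y x"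
    using G uv(1) unfolding simple_graph_def by blast+
  have nonadj: "x \<notin> C \<and> \<not> E x y \<and> \<not> E y x" if "x \<in> {u, v}" "y \<in> C" for x y
    using that far uvV sym unfolding closed_nbhd_def by blast
  have new: "{u, v} \<inter> e = {} \<and> (\<forall>x\<in>{u, v}. \<forall>y\<in>e. \<not> ?F x y \<and> \<not> ?F y x)" if "e \<in> M" for e
    using MC that nonadj unfolding bip_def by blast
  have "{u, v} \<in> {{u, v} |u v. u \<in> V \<and> v \<in> V \<and> ?F u v}"
    using uvV uv unfolding bip_def by blast
  with edges have "insert {u, v} M \<subseteq> {{u, v} |u v. u \<in> V \<and> v \<in> V \<and> ?F u v}"
    by (simp only: insert_subset)
  moreover have "\<forall>e\<in>insert {u, v} M. \<forall>e'\<in>insert {u, v} M.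
      e \<noteq> e' \<longrightarrow> e \<inter> e' = {} \<and> (\<forall>x\<in>e. \<forall>y\<in>e'. \<not> ?F x y)"
  proof (intro ballI impI)
    fix e e' assume e: "e \<in> insert {u, v} M" "e' \<in> insert {u, v} M" "e \<noteq> e'"
    then consider "e \<in> M" "e' \<in> M" | "e = {u, v}" "e' \<in> M" | "e \<in> M" "e' = {u, v}" by blast
    then show "e \<inter> e' = {} \<and> (\<forall>x\<in>e. \<forall>y\<in>e'. \<not> ?F x y)"
    proof cases
      case 1
      then show ?thesis using apart e(3) by blast
    next
      case 2
      then show ?thesis using new[of e'] by simp
    next
      case 3
      then show ?thesis using new[of e] by blast
    qed
  qed
  ultimately show ?thesis unfolding induced_matching_def ..
qed

lemma straddling_path_extends_cut_matching:
  assumes G: "simple_graph V E" and \<sigma>: "linear_layout V \<sigma>"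
    and M: "induced_matching V (layout_cut V E \<sigma> s) M" and MC: "\<forall>e\<in>M. e \<subseteq> C"
    and p: "is_path V E p" "set p \<inter> closed_nbhd V E C = {}" "straddles \<sigma> s (set p)"
  shows "card M + 1 \<le> mw V E \<sigma>"
proof -
  have fin: "finite V" and sym: "\<forall>u v. E u v \<longrightarrow> E v u"
    using G unfolding simple_graph_def by blast+
  have pV: "set p \<subseteq> V" using p(1) unfolding is_path_def by blast
  obtain u v where uv: "E u v" "u \<in> set p" "v \<in> set p" "\<sigma> u \<le> s" "s < \<sigma> v"
    using path_straddling_cut_edge[OF sym p(1,3)] by blast
  have "u \<in> prefix_set V \<sigma> s" "v \<notin> prefix_set V \<sigma> s"
    using uv pV unfolding prefix_set_def by auto
  then have M': "induced_matching V (layout_cut V E \<sigma> s) (insert {u, v} M)"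
    using induced_matching_insert_cut_edge[OF G M MC uv(1)] uv(2,3) p(2) by blast
  have "{u, v} \<notin> M" using MC uv(2) p(2) unfolding closed_nbhd_def by blast
  moreover have "finite M"
    using induced_matching_subset_Pow[OF M] fin by (meson finite_Pow_iff finite_subset)
  ultimately have "card M + 1 = card (insert {u, v} M)" by simp
  also have "\<dots> \<le> mim V (layout_cut V E \<sigma> s)" by (rule card_le_mim[OF fin M'])
  also have "\<dots> \<le> mw V E \<sigma>"
    using straddles_cut_range[OF \<sigma> pV p(3)] by (intro mim_cut_le_mw)
  finally show ?thesis .
qed

lemma straddling_component_extends_cut_matching:
  assumes G: "simple_graph V E" and \<sigma>: "linear_layout V \<sigma>"
    and M: "induced_matching V (layout_cut V E \<sigma> s) M" and MC: "\<forall>e\<in>M. e \<subseteq> C"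
    and X: "X \<subseteq> V" "connected_graph X (induced X E)" "X \<inter> closed_nbhd V E C = {}"
      "straddles \<sigma> s X"
  shows "card M + 1 \<le> mw V E \<sigma>"
proof -
  obtain x y where xy: "x \<in> X" "\<sigma> x \<le> s" "y \<in> X" "s < \<sigma> y"
    using X(4) unfolding straddles_def by blast
  then obtain q where q: "is_path X (induced X E) q" "hd q = x" "last q = y"
    using X(2) unfolding connected_graph_def by blast
  have "set q \<subseteq> X" "q \<noteq> []" using q(1) unfolding is_path_def by blast+
  then have "x \<in> set q" "y \<in> set q" using q(2,3) hd_in_set last_in_set by blast+
  with xy have "straddles \<sigma> s (set q)" unfolding straddles_def by blast
  moreover have "set q \<inter> closed_nbhd V E C = {}" using X(3) \<open>set q \<subseteq> X\<close> by blast
  ultimately show ?thesis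
    using straddling_path_extends_cut_matching[OF G \<sigma> M MC is_path_induced[OF X(1) q(1)]] by blast
qed

lemma middle_component_cut:
  assumes G: "simple_graph V E" and \<sigma>: "linear_layout V \<sigma>"
    and M: "induced_matching V (layout_cut V E \<sigma> s) M" and MB: "\<forall>e\<in>M. e \<subseteq> B"
    and A: "A \<subseteq> V" "connected_graph A (induced A E)" "A \<inter> closed_nbhd V E B = {}"
    and C: "C \<subseteq> V" "connected_graph C (induced C E)" "C \<inter> closed_nbhd V E B = {}"
    and P: "\<exists>p. is_path V E p \<and> hd p \<in> A \<and> last p \<in> C \<and> set p \<inter> closed_nbhd V E B = {}"
    and st: "straddles \<sigma> s (A \<union> C)"
  shows "card M + 1 \<le> mw V E \<sigma>"
proof -
  obtain p where p: "is_path V E p" "hd p \<in> A" "last p \<in> C" "set p \<inter> closed_nbhd V E B = {}"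
    using P by blast
  have "p \<noteq> []" using p(1) unfolding is_path_def by blast
  then have "hd p \<in> A \<inter> (set p \<union> C)" "last p \<in> set p \<inter> C" using p(2,3) by auto
  moreover have "straddles \<sigma> s (A \<union> (set p \<union> C))" by (rule straddles_mono[OF st]) blast
  ultimately consider "straddles \<sigma> s A" | "straddles \<sigma> s (set p)" | "straddles \<sigma> s C"
    using straddles_Un_cases[of A "set p \<union> C"] straddles_Un_cases[of "set p" C] by blast
  then show ?thesis
  proof cases
    case 1
    then show ?thesis by (rule straddling_component_extends_cut_matching[OF G \<sigma> M MB A])
  next
    case 2
    then show ?thesis by (rule straddling_path_extends_cut_matching[OF G \<sigma> M MB p(1,4)])
  next
    case 3
    then show ?thesis by (rule straddling_component_extends_cut_matching[OF G \<sigma> M MB C])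
  qed
qed

lemma mw_pos_of_edge:
  assumes G: "simple_graph V E" and \<sigma>: "linear_layout V \<sigma>" and uv: "E u v"
  shows "1 \<le> mw V E \<sigma>"
proof -
  have V: "u \<in> V" "v \<in> V" "u \<noteq> v" using G uv unfolding simple_graph_def by blast+
  then have p: "is_path V E [u, v]" using uv unfolding is_path_def by (simp add: less_Suc_eq)
  have "\<sigma> u \<noteq> \<sigma> v"
    using \<sigma> V unfolding linear_layout_def by (metis bij_betw_imp_inj_on inj_on_contraD)
  then have st: "straddles \<sigma> (min (\<sigma> u) (\<sigma> v)) (set [u, v])" unfolding straddles_def by auto
  have M: "induced_matching V (layout_cut V E \<sigma> (min (\<sigma> u) (\<sigma> v))) {}"
    unfolding induced_matching_def by simp
  have N: "set [u, v] \<inter> closed_nbhd V E {} = {}" unfolding closed_nbhd_def by simp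
  show ?thesis using straddling_path_extends_cut_matching[OF G \<sigma> M _ p N st] by simp
qed

lemma set_dist_le_path_length:
  "is_path V E p \<Longrightarrow> hd p \<in> A \<Longrightarrow> last p \<in> B \<Longrightarrow> set_dist V E A B \<le> enat (length p - 1)"
  unfolding set_dist_def by (rule INF_lower) simp

lemma set_dist_ge_2_disjoint_closed_nbhd:
  assumes G: "simple_graph V E" and AB: "A \<subseteq> V" "B \<subseteq> V" and d: "2 \<le> set_dist V E A B"
  shows "A \<inter> closed_nbhd V E B = {}" "B \<inter> closed_nbhd V E A = {}"
proof -
  have long: "2 \<le> length p - 1" if "is_path V E p" "hd p \<in> A" "last p \<in> B" for p
    using order_trans[OF d set_dist_le_path_length[OF that]] by (simp add: numeral_eq_enat)
  have "A \<inter> B = {}"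
  proof (rule ccontr)
    assume "A \<inter> B \<noteq> {}"
    then obtain x where "x \<in> A" "x \<in> B" by blast
    moreover from this have "is_path V E [x]" using AB unfolding is_path_def by auto
    ultimately show False using long[of "[x]"] by simp
  qed
  moreover have "\<not> E x y" if "x \<in> A" "y \<in> B" for x y
  proof
    assume "E x y"
    then have "is_path V E [x, y]"
      using G unfolding simple_graph_def is_path_def by (auto simp: less_Suc_eq)
    then show False using long[of "[x, y]"] that by simp
  qed
  moreover have "\<And>x y. E x y \<Longrightarrow> E y x" using G unfolding simple_graph_def by blast
  ultimately show "A \<inter> closed_nbhd V E B = {}" "B \<inter> closed_nbhd V E A = {}"
    unfolding closed_nbhd_def by blast+
qed

lemma set_dist_ge_2_path_edge:
  assumes "2 \<le> set_dist V E A B" "is_path V E p" "hd p \<in> A" "last p \<in> B"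
  shows "E (p ! 0) (p ! 1)"
proof -
  have "2 \<le> enat (length p - 1)" using order_trans[OF assms(1) set_dist_le_path_length[OF assms(2-4)]] .
  then have "Suc 0 < length p" by (simp add: numeral_eq_enat)
  then show ?thesis using assms(2) unfolding is_path_def by simp
qed

theorem lemma3:
  fixes V :: "'a set" and E :: "'a \<Rightarrow> 'a \<Rightarrow> bool" and C1 C2 C3 :: "'a set"
  assumes G: "simple_graph V E"
    and sub: "C1 \<subseteq> V" "C2 \<subseteq> V" "C3 \<subseteq> V"
    and ne: "C1 \<noteq> {}" "C2 \<noteq> {}" "C3 \<noteq> {}"
    and conn: "connected_graph C1 (induced C1 E)" "connected_graph C2 (induced C2 E)"
              "connected_graph C3 (induced C3 E)"
    and dist: "set_dist V E C1 C2 \<ge> 2" "set_dist V E C1 C3 \<ge> 2" "set_dist V E C2 C3 \<ge> 2"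
    and P12: "\<exists>p. is_path V E p \<and> hd p \<in> C1 \<and> last p \<in> C2 \<and> set p \<inter> closed_nbhd V E C3 = {}"
    and P13: "\<exists>p. is_path V E p \<and> hd p \<in> C1 \<and> last p \<in> C3 \<and> set p \<inter> closed_nbhd V E C2 = {}"
    and P23: "\<exists>p. is_path V E p \<and> hd p \<in> C2 \<and> last p \<in> C3 \<and> set p \<inter> closed_nbhd V E C1 = {}"
  shows "lmw V E > min (lmw C1 (induced C1 E)) (min (lmw C2 (induced C2 E)) (lmw C3 (induced C3 E)))"
proof -
  let ?k = "min (lmw C1 (induced C1 E)) (min (lmw C2 (induced C2 E)) (lmw C3 (induced C3 E)))"
  have fin: "finite V" using G unfolding simple_graph_def by blast
  obtain \<sigma> where \<sigma>: "linear_layout V \<sigma>" and opt: "lmw V E = mw V E \<sigma>"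
    using lmw_attained[OF fin] by blast
  note d12 = set_dist_ge_2_disjoint_closed_nbhd[OF G sub(1,2) dist(1)]
  note d13 = set_dist_ge_2_disjoint_closed_nbhd[OF G sub(1,3) dist(2)]
  note d23 = set_dist_ge_2_disjoint_closed_nbhd[OF G sub(2,3) dist(3)]
  have "?k + 1 \<le> mw V E \<sigma>"
  proof (cases "?k = 0")
    case True
    obtain p where "is_path V E p" "hd p \<in> C1" "last p \<in> C2" using P12 by blast
    with True show ?thesis using mw_pos_of_edge[OF G \<sigma> set_dist_ge_2_path_edge[OF dist(1)]] by simp
  next
    case False
    then have k: "1 \<le> ?k" by simp
    have bounds: "?k \<le> lmw C1 (induced C1 E)" "?k \<le> lmw C2 (induced C2 E)"
      "?k \<le> lmw C3 (induced C3 E)" by simp_all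
    note cut = restricted_layout_cut[OF fin _ \<sigma> k]
    obtain s1 M1 where M1: "induced_matching V (layout_cut V E \<sigma> s1) M1" "?k \<le> card M1"
      "\<forall>e\<in>M1. e \<subseteq> C1" "straddles \<sigma> s1 C1" using cut[OF sub(1) bounds(1)] by blast
    obtain s2 M2 where M2: "induced_matching V (layout_cut V E \<sigma> s2) M2" "?k \<le> card M2"
      "\<forall>e\<in>M2. e \<subseteq> C2" "straddles \<sigma> s2 C2" using cut[OF sub(2) bounds(2)] by blast
    obtain s3 M3 where M3: "induced_matching V (layout_cut V E \<sigma> s3) M3" "?k \<le> card M3"
      "\<forall>e\<in>M3. e \<subseteq> C3" "straddles \<sigma> s3 C3" using cut[OF sub(3) bounds(3)] by blast
    consider "min s2 s3 \<le> s1" "s1 \<le> max s2 s3" | "min s1 s3 \<le> s2" "s2 \<le> max s1 s3"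
      | "min s1 s2 \<le> s3" "s3 \<le> max s1 s2" by linarith
    then show ?thesis
    proof cases
      case 1
      show ?thesis using M1(2) middle_component_cut[OF G \<sigma> M1(1,3) sub(2) conn(2) d12(2) sub(3) conn(3) d13(2) P23
          straddles_Un_between[OF M2(4) M3(4) 1]] by linarith
    next
      case 2
      show ?thesis using M2(2) middle_component_cut[OF G \<sigma> M2(1,3) sub(1) conn(1) d12(1) sub(3) conn(3) d23(2) P13
          straddles_Un_between[OF M1(4) M3(4) 2]] by linarith
    next
      case 3
      show ?thesis using M3(2) middle_component_cut[OF G \<sigma> M3(1,3) sub(1) conn(1) d13(1) sub(2) conn(2) d23(1) P12
          straddles_Un_between[OF M1(4) M2(4) 3]] by linarith
    qed
  qed
  then show ?thesis using opt by simp
qed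

end
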